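(* Let $C$ be an $[n,k]$ code over $\mathbb{F}_q$ with $C^\perp\neq\{\bm 0\}$ and $d^\perp:=d(C^\perp)\ge 3$, and suppose that it is not the case that both $q=2^m$ for some $m\ge 2$ and $d^\perp>4$. If $C$ is monomially equivalent to a dual Hamming code, or if $q=2$, $k=n-1$ and $d^\perp=n$ is odd, then $\gamma(C)=k-d^\perp+3$. Otherwise $\gamma(C)\le k-d^\perp+2$.
   Context: An $[n,k]$ code over $\mathbb{F}_q$ is a $k$-dimensional subspace $C\subseteq\mathbb{F}_q^n$; write $E=\{1,\dots,n\}$. For $\bm{x}\in\mathbb{F}_q^n$, $\mathrm{supp}(\bm{x})=\{i: x_i\neq 0\}$ and the weight is $|\mathrm{supp}(\bm{x})|$; for $B\subseteq\mathbb{F}_q^n$, $\mathrm{Supp}(B)=\bigcup_{\bm{x}\in B}\mathrm{supp}(\bm{x})$. $C^\perp$ is the dual code with respect to the standard inner product and $d(C^\perp)$ is the minimum weight of a nonzero codeword of $C^\perp$. The covering dimension is $\gamma(C)=\infty$ if $\mathrm{Supp}(C)\neq E$, and otherwise $\gamma(C)$ is the least positive integer $r$ such that $C$ has an $r$-dimensional subspace $D$ with $\mathrm{Supp}(D)=E$. A dual Hamming code is an $[(q^k-1)/(q-1),k]$ code over $\mathbb{F}_q$ with a generator matrix whose columns consist of exactly one nonzero vector from each one-dimensional subspace of $\mathbb{F}_q^k$. Two codes are monomially equivalent if one is obtained from the other by permuting coordinates and multiplying coordinates by nonzero scalars. *)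

theory Defs
  imports "HOL-Analysis.Analysis" "HOL-Library.Extended_Nat"
begin

text \<open>Codes of length n = CARD('n) over the finite field 'a; vectors are 'a ^ 'n,
  the coordinate set E is UNIV :: 'n set.\<close>

definition is_code :: "('a::field ^ 'n) set \<Rightarrow> bool" where
  "is_code C \<longleftrightarrow> vec.subspace C"

definition code_dim :: "('a::field ^ 'n) set \<Rightarrow> nat" where
  "code_dim C = vec.dim C"

definition supp :: "'a::zero ^ 'n \<Rightarrow> 'n set" where
  "supp x = {i. x $ i \<noteq> 0}"

definition Supp :: "('a::zero ^ 'n) set \<Rightarrow> 'n set" where
  "Supp B = (\<Union>x\<in>B. supp x)"

definition wt :: "'a::zero ^ 'n::finite \<Rightarrow> nat" where
  "wt x = card (supp x)"

definition dual_code :: "('a::field ^ 'n::finite) set \<Rightarrow> ('a ^ 'n) set" where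
  "dual_code C = {y. \<forall>x\<in>C. (\<Sum>i\<in>UNIV. x $ i * y $ i) = 0}"

definition min_dist :: "('a::field ^ 'n::finite) set \<Rightarrow> nat" where
  "min_dist C = Min {wt x | x. x \<in> C \<and> x \<noteq> 0}"

definition covering_dim :: "('a::field ^ 'n::finite) set \<Rightarrow> enat" where
  "covering_dim C = (if Supp C \<noteq> UNIV then \<infinity>
     else enat (LEAST r. r > 0 \<and> (\<exists>D. vec.subspace D \<and> D \<subseteq> C \<and> vec.dim D = r \<and> Supp D = UNIV)))"

text \<open>Dual Hamming code of dimension k: the row space of a k x n generator matrix G
  (entries G i j, i<k, j in 'n) whose columns are nonzero and contain exactly one nonzero
  vector from each one-dimensional subspace of F_q^k (vectors of F_q^k are functions
  nat => 'a vanishing outside {0..<k}).\<close>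
definition dual_hamming_generator :: "nat \<Rightarrow> (nat \<Rightarrow> 'n::finite \<Rightarrow> 'a::{finite,field}) \<Rightarrow> bool" where
  "dual_hamming_generator k G \<longleftrightarrow>
     CARD('n) = (CARD('a) ^ k - 1) div (CARD('a) - 1) \<and>
     (\<forall>j. \<exists>i<k. G i j \<noteq> 0) \<and>
     (\<forall>v::nat \<Rightarrow> 'a. (\<forall>i\<ge>k. v i = 0) \<and> (\<exists>i. v i \<noteq> 0) \<longrightarrow>
         (\<exists>!j. \<exists>c. \<forall>i<k. G i j = c * v i))"

definition row_space :: "nat \<Rightarrow> (nat \<Rightarrow> 'n::finite \<Rightarrow> 'a::field) \<Rightarrow> ('a ^ 'n) set" where
  "row_space k G = {(\<chi> j. \<Sum>i<k. u i * G i j) | u. True}"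

definition is_dual_hamming :: "nat \<Rightarrow> ('a::{finite,field} ^ 'n::finite) set \<Rightarrow> bool" where
  "is_dual_hamming k H \<longleftrightarrow> (\<exists>G. dual_hamming_generator k G \<and> H = row_space k G)"

definition monomially_equivalent :: "('a::field ^ 'n) set \<Rightarrow> ('a ^ 'n) set \<Rightarrow> bool" where
  "monomially_equivalent C D \<longleftrightarrow>
     (\<exists>\<sigma> c. bij \<sigma> \<and> (\<forall>j. c j \<noteq> 0) \<and> C = (\<lambda>x. \<chi> j. c j * x $ \<sigma> j) ` D)"

end

theory Submission
  imports Defs "HOL-Library.FuncSet"
begin

text \<open>Write d for the minimum distance of the dual code. No nonzero dual word has weight below d,
  so any d - 1 coordinates of C can be prescribed freely. Fix a set J of d - 1 coordinates and a vector a without zeros on J.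
  The codewords whose restriction to J is a multiple of a form a subcode of dimension at most
  k - (d - 2), and it covers every further coordinate l unless a is orthogonal on J to the dual
  word of weight d supported in J \<union> {l}, which is unique up to scaling. Normalized at a point
  j0 \<in> J, these dual words either agree or differ everywhere on J - {j0}; this leaves room to
  choose a when q \<ge> 3 or when q = 2 and d is even. For q = 2 and d odd, exchanging one
  coordinate of J removes all obstructions unless n = d and k = n - 1.

  For d = 3 it suffices to find a proper covering subcode. If there is none, every hyperplane of
  C misses a coordinate; in terms of a generator matrix, every point of the projective space is
  represented by exactly one column, so C is a dual Hamming code. Conversely a dual Hamming code
  has no proper covering subcode, and the binary code of odd length n with d = n has no covering
  line but a covering plane.\<close>

abbreviation dot :: "'a::comm_ring_1 ^ 'n::finite \<Rightarrow> 'a ^ 'n \<Rightarrow> 'a" where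
  "dot x y \<equiv> \<Sum>i\<in>UNIV. x $ i * y $ i"

lemma mem_dual_code_iff: "y \<in> dual_code C \<longleftrightarrow> (\<forall>x\<in>C. dot x y = 0)"
  by (simp add: dual_code_def)

lemma subspace_dual_code: "vec.subspace (dual_code C)"
  unfolding vec.subspace_def dual_code_def
  by (simp add: distrib_left sum.distrib mult.left_commute sum_distrib_left[symmetric])

lemma dot_add_right: "dot x (y + z) = dot x y + dot x z"
  by (simp add: distrib_left sum.distrib)

lemma dot_diff_right: "dot x (y - z) = dot x y - dot x z"
  by (simp add: right_diff_distrib sum_subtractf)

lemma dot_axis_right: "dot x (axis j c) = c * x $ j"
proof -
  have "dot x (axis j c) = (\<Sum>i\<in>UNIV. if i = j then c * x $ i else 0)"
    by (rule sum.cong) (auto simp: axis_def)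
  then show ?thesis by simp
qed

lemma sum_UNIV_if_mem: "(\<Sum>i\<in>(UNIV::'n::finite set). if i \<in> K then f i else 0) = (\<Sum>i\<in>K. f i)"
  using sum.inter_restrict[of "UNIV::'n set" f K] by simp

lemma dual_code_separates:
  fixes W :: "('a::field ^ 'n::finite) set"
  assumes W: "vec.subspace W" and x: "x \<notin> W"
  obtains y where "y \<in> dual_code W" "dot x y \<noteq> 0"
proof -
  obtain B0 where B0: "B0 \<subseteq> W" "vec.independent B0" "W \<subseteq> vec.span B0"
    by (rule vec.basis_exists)
  have span_B0: "vec.span B0 = W" using B0 W vec.span_subspace by blast
  then have x_B0: "x \<notin> vec.span B0" using x by simp
  obtain B where B: "insert x B0 \<subseteq> B" "vec.independent B" "UNIV \<subseteq> vec.span B"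
    by (rule vec.maximal_independent_subset_extend[OF subset_UNIV vec.independent_insertI[OF x_B0 B0(2)]])
       blast
  define f where "f v = vec.representation B v x" for v
  define y where "y = (\<chi> i. f (axis i 1))"
  have in_span: "v \<in> vec.span B" for v
    using B(3) by auto
  have f_dot: "f v = dot v y" for v
  proof -
    have "f v = f (\<Sum>i\<in>UNIV. v $ i *s axis i 1)" by (simp add: basis_expansion)
    also have "\<dots> = (\<Sum>i\<in>UNIV. v $ i * f (axis i 1))"
      unfolding f_def
      by (simp add: vec.representation_sum[OF B(2)] in_span vec.representation_scale[OF B(2)])
    finally show ?thesis by (simp add: y_def)
  qed
  have "f w = 0" if "w \<in> W" for w
  proof -
    have "f w = vec.representation B0 w x"
      using that span_B0 B(1) vec.representation_extend[OF B(2)] by (auto simp: f_def)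
    also have "\<dots> = 0"
    proof (rule ccontr)
      assume "vec.representation B0 w x \<noteq> 0"
      then have "x \<in> B0" by (rule vec.representation_ne_zero)
      then show False using x_B0 vec.span_base by blast
    qed
    finally show ?thesis .
  qed
  moreover have "f x = 1"
    using vec.representation_basis[OF B(2)] B(1) by (auto simp: f_def)
  ultimately show ?thesis
    using that[of y] f_dot by (simp add: mem_dual_code_iff)
qed

lemma extends_to_codeword_if_orthogonal:
  fixes C :: "('a::field ^ 'n::finite) set"
  assumes C: "vec.subspace C"
    and orth: "\<forall>y\<in>dual_code C. supp y \<subseteq> K \<longrightarrow> (\<Sum>i\<in>K. y $ i * a $ i) = 0"
  obtains z where "z \<in> C" "\<forall>i\<in>K. z $ i = a $ i"
proof -
  define pr where "pr z = (\<chi> i. if i \<in> K then z $ i else 0)" for z :: "'a ^ 'n"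
  have pr_nth: "pr z $ i = (if i \<in> K then z $ i else 0)" for z i
    by (simp add: pr_def)
  have pr_linear: "Vector_Spaces.linear (*s) (*s) pr"
    by (simp add: Vector_Spaces.linear_iff vec.vector_space_axioms vec_eq_iff pr_nth)
  have "pr a \<in> pr ` C"
  proof (rule ccontr)
    assume "pr a \<notin> pr ` C"
    then obtain y where y: "y \<in> dual_code (pr ` C)" "dot (pr a) y \<noteq> 0"
      using dual_code_separates vec.linear_subspace_image[OF pr_linear C] by blast
    have "dot x (pr y) = dot (pr x) y" for x
      by (rule sum.cong) (auto simp: pr_nth)
    then have "pr y \<in> dual_code C"
      using y(1) by (simp add: mem_dual_code_iff)
    moreover have "supp (pr y) \<subseteq> K"
      by (auto simp: supp_def pr_nth)
    moreover have "dot (pr a) y = (\<Sum>i\<in>K. pr y $ i * a $ i)"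
    proof -
      have "dot (pr a) y = (\<Sum>i\<in>UNIV. if i \<in> K then pr y $ i * a $ i else 0)"
        by (rule sum.cong) (auto simp: pr_nth)
      then show ?thesis by (simp only: sum_UNIV_if_mem)
    qed
    ultimately show False using orth y(2) by simp
  qed
  then obtain z where z: "z \<in> C" "pr a = pr z" by auto
  have "z $ i = a $ i" if "i \<in> K" for i
    using arg_cong[OF z(2), of "\<lambda>v. v $ i"] that by (simp add: pr_nth)
  then show ?thesis using that z(1) by blast
qed

lemma wt_le_card: "supp (y::'a::zero ^ 'n::finite) \<subseteq> K \<Longrightarrow> wt y \<le> card K"
  unfolding wt_def by (rule card_mono) auto

lemma wt_le_CARD: "wt (y::'a::zero ^ 'n::finite) \<le> CARD('n)"
  using wt_le_card[of y UNIV] by simp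

lemma obtain_distinct_pair:
  assumes "2 \<le> CARD('n::finite)"
  obtains j1 j2 :: "'n::finite" where "j1 \<noteq> j2"
proof -
  obtain S :: "'n set" where "card S = 2" using assms by (meson ex_card)
  then show ?thesis using that by (auto simp: card_2_iff)
qed

lemma finite_weights: "finite {wt x | x. x \<in> (D :: ('a::zero ^ 'n::finite) set) \<and> x \<noteq> 0}"
  by (rule finite_subset[of _ "{..CARD('n)}"]) (auto simp: wt_le_CARD)

lemma min_dist_le_wt:
  fixes y :: "'a::field ^ 'n::finite"
  assumes "y \<in> D" "y \<noteq> 0"
  shows "min_dist D \<le> wt y"
  unfolding min_dist_def using assms finite_weights by (intro Min_le) auto

lemma min_dist_le_CARD:
  fixes D :: "('a::field ^ 'n::finite) set"
  assumes "D \<noteq> {0}" "0 \<in> D"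
  shows "min_dist D \<le> CARD('n)"
proof -
  obtain y where "y \<in> D" "y \<noteq> 0" using assms by blast
  then show ?thesis using min_dist_le_wt wt_le_CARD le_trans by blast
qed

lemma dual_word_eq_0_if_card_lt:
  fixes C :: "('a::field ^ 'n::finite) set"
  assumes "y \<in> dual_code C" "supp y \<subseteq> K" "card K < min_dist (dual_code C)"
  shows "y = 0"
proof (rule ccontr)
  assume "y \<noteq> 0"
  then have "min_dist (dual_code C) \<le> card K"
    using min_dist_le_wt[OF assms(1)] wt_le_card[OF assms(2)] by (meson le_trans)
  then show False using assms(3) by simp
qed

lemma supp_eq_if_card_le_min_dist:
  fixes C :: "('a::field ^ 'n::finite) set"
  assumes "y \<in> dual_code C" "y \<noteq> 0" "supp y \<subseteq> K" "card K \<le> min_dist (dual_code C)"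
  shows "supp y = K"
proof (rule card_seteq)
  show "card K \<le> card (supp y)"
    using min_dist_le_wt[OF assms(1,2)] assms(4) by (simp add: wt_def)
qed (use assms(3) in auto)

lemma codeword_with_prescribed_restriction:
  fixes C :: "('a::field ^ 'n::finite) set"
  assumes "vec.subspace C" "card K < min_dist (dual_code C)"
  obtains z where "z \<in> C" "\<forall>i\<in>K. z $ i = a $ i"
proof (rule extends_to_codeword_if_orthogonal[OF assms(1)])
  show "\<forall>y\<in>dual_code C. supp y \<subseteq> K \<longrightarrow> (\<Sum>i\<in>K. y $ i * a $ i) = 0"
  proof (intro ballI impI)
    fix y assume "y \<in> dual_code C" "supp y \<subseteq> K"
    then have "y = 0" by (rule dual_word_eq_0_if_card_lt[OF _ _ assms(2)])
    then show "(\<Sum>i\<in>K. y $ i * a $ i) = 0" by simp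
  qed
qed

lemma Supp_eq_UNIV_if_min_dist_dual_ge_2:
  fixes C :: "('a::field ^ 'n::finite) set"
  assumes "vec.subspace C" "2 \<le> min_dist (dual_code C)"
  shows "Supp C = UNIV"
proof -
  have "j \<in> Supp C" for j
  proof -
    obtain z where "z \<in> C" "z $ j = 1"
      using codeword_with_prescribed_restriction[OF assms(1), of "{j}" 1] assms(2) by auto
    then show ?thesis by (force simp: Supp_def supp_def)
  qed
  then show ?thesis by auto
qed

lemma dim_pos_if_Supp_eq_UNIV:
  fixes D :: "('a::field ^ 'n::finite) set"
  assumes "Supp D = UNIV"
  shows "0 < vec.dim D"
proof -
  obtain z where "z \<in> D" "z $ undefined \<noteq> 0"
    using assms by (auto simp: Supp_def supp_def set_eq_iff)
  then show ?thesis
    using vec.dim_eq_0 by (metis gr0I singletonD subsetD zero_index)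
qed

lemma covering_dim_le_dim:
  fixes C D :: "('a::field ^ 'n::finite) set"
  assumes "Supp C = UNIV" "vec.subspace D" "D \<subseteq> C" "Supp D = UNIV"
  shows "covering_dim C \<le> enat (vec.dim D)"
proof -
  have "(LEAST r. r > 0 \<and> (\<exists>D. vec.subspace D \<and> D \<subseteq> C \<and> vec.dim D = r \<and> Supp D = UNIV))
        \<le> vec.dim D"
    using assms dim_pos_if_Supp_eq_UNIV[OF assms(4)] by (intro Least_le) blast
  then show ?thesis using assms(1) by (simp add: covering_dim_def)
qed

lemma covering_dim_eq_dim:
  fixes C D :: "('a::field ^ 'n::finite) set"
  assumes "Supp C = UNIV" "vec.subspace D" "D \<subseteq> C" "Supp D = UNIV"
    and minimal: "\<And>D'. vec.subspace D' \<Longrightarrow> D' \<subseteq> C \<Longrightarrow> Supp D' = UNIV \<Longrightarrow> vec.dim D \<le> vec.dim D'"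
  shows "covering_dim C = enat (vec.dim D)"
proof -
  have "(LEAST r. r > 0 \<and> (\<exists>D. vec.subspace D \<and> D \<subseteq> C \<and> vec.dim D = r \<and> Supp D = UNIV))
        = vec.dim D"
    using assms dim_pos_if_Supp_eq_UNIV[OF assms(4)] by (intro Least_equality) blast+
  then show ?thesis using assms(1) by (simp add: covering_dim_def)
qed

text \<open>The coefficient vector of a functional that does not vanish on a dual Hamming code is
  proportional to one of the columns of its generator matrix.\<close>
lemma dual_hamming_functional_is_coordinate:
  fixes C :: "('a::{finite,field} ^ 'n::finite) set"
  assumes "is_dual_hamming k H" "monomially_equivalent C H" "\<exists>x\<in>C. dot x y \<noteq> 0"
  obtains j e where "\<forall>z\<in>C. dot z y = e * z $ j"
proof -
  obtain G where gen: "dual_hamming_generator k G" and H: "H = row_space k G"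
    using assms(1) by (auto simp: is_dual_hamming_def)
  obtain \<sigma> c where \<sigma>: "bij \<sigma>" and c: "\<forall>j. c j \<noteq> 0"
    and CH: "C = (\<lambda>x. \<chi> j. c j * x $ \<sigma> j) ` H"
    using assms(2) by (auto simp: monomially_equivalent_def)
  define M where "M u = (\<chi> j. c j * (\<Sum>i<k. u i * G i (\<sigma> j)))" for u :: "nat \<Rightarrow> 'a"
  have C_eq: "C = range M"
    unfolding CH H row_space_def M_def by (simp add: full_SetCompr_eq image_image)
  define v where "v i = (if i < k then \<Sum>j\<in>UNIV. y $ j * c j * G i (\<sigma> j) else 0)" for i
  have dot_M: "dot (M u) y = (\<Sum>i<k. u i * v i)" for u
  proof -
    have "dot (M u) y = (\<Sum>j\<in>UNIV. \<Sum>i<k. u i * (y $ j * c j * G i (\<sigma> j)))"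
      unfolding M_def by (simp add: sum_distrib_left sum_distrib_right mult_ac)
    also have "\<dots> = (\<Sum>i<k. u i * v i)"
      by (subst sum.swap) (simp add: v_def sum_distrib_left)
    finally show ?thesis .
  qed
  obtain u0 where "dot (M u0) y \<noteq> 0"
    using assms(3) unfolding C_eq by blast
  then have "(\<Sum>i<k. u0 i * v i) \<noteq> 0" by (metis dot_M)
  then obtain i0 where "v i0 \<noteq> 0"
    by (metis (no_types, lifting) mult_zero_right sum.neutral)
  moreover have "\<forall>i\<ge>k. v i = 0" by (simp add: v_def)
  ultimately obtain j0 e where j0: "\<forall>i<k. G i j0 = e * v i"
    using gen unfolding dual_hamming_generator_def by blast
  obtain i1 where "i1 < k" "G i1 j0 \<noteq> 0"
    using gen unfolding dual_hamming_generator_def by blast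
  then have "e \<noteq> 0" using j0 by auto
  obtain j where j: "\<sigma> j = j0" using \<sigma> by (metis bij_pointE)
  have "dot (M u) y = inverse (c j * e) * M u $ j" for u
  proof -
    have "M u $ j = c j * e * (\<Sum>i<k. u i * v i)"
      using j0 j by (simp add: M_def sum_distrib_left mult_ac)
    then show ?thesis using c \<open>e \<noteq> 0\<close> dot_M by (simp add: field_simps)
  qed
  then show ?thesis using that C_eq by blast
qed

lemma min_dist_dual_eq_3_if_dual_hamming:
  fixes C :: "('a::{finite,field} ^ 'n::finite) set"
  assumes C: "vec.subspace C" and nonzero: "dual_code C \<noteq> {0}"
    and d3: "3 \<le> min_dist (dual_code C)"
    and ham: "is_dual_hamming k H" "monomially_equivalent C H"
  shows "min_dist (dual_code C) = 3"
proof -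
  have "2 \<le> CARD('n)"
    using d3 min_dist_le_CARD[OF nonzero vec.subspace_0[OF subspace_dual_code]] by simp
  then obtain j1 j2 :: 'n where j12: "j1 \<noteq> j2" by (rule obtain_distinct_pair)
  define y :: "'a ^ 'n" where "y = axis j1 1 + axis j2 1"
  have dot_y: "dot x y = x $ j1 + x $ j2" for x
    unfolding y_def dot_add_right dot_axis_right by simp
  have "card {j1, j2} < min_dist (dual_code C)"
    using d3 j12 by simp
  then obtain z where z: "z \<in> C" "\<forall>i\<in>{j1, j2}. z $ i = axis j1 1 $ i"
    using codeword_with_prescribed_restriction[OF C] by blast
  then have "dot z y \<noteq> 0" using j12 by (simp add: dot_y axis_def)
  then obtain j3 e where j3: "\<forall>x\<in>C. dot x y = e * x $ j3"
    by (rule dual_hamming_functional_is_coordinate[OF ham bexI[OF _ z(1)]])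
  define w where "w = y - axis j3 e"
  have "dot x w = 0" if "x \<in> C" for x
  proof -
    have "dot x y = e * x $ j3" using bspec[OF j3 that] .
    then show ?thesis unfolding w_def dot_diff_right dot_axis_right by simp
  qed
  then have "w \<in> dual_code C"
    by (simp add: mem_dual_code_iff)
  moreover have "w \<noteq> 0"
  proof (cases "j3 = j1")
    case True
    then have "w $ j2 = 1" using j12 by (simp add: w_def y_def axis_def)
    then show ?thesis by auto
  next
    case False
    then have "w $ j1 = 1" using j12 by (simp add: w_def y_def axis_def)
    then show ?thesis by auto
  qed
  moreover have "wt w \<le> 3"
  proof -
    have "wt w \<le> card {j1, j2, j3}"
      by (rule wt_le_card) (auto simp: supp_def w_def y_def axis_def)
    also have "\<dots> \<le> 3" by (simp add: card_insert_if)
    finally show ?thesis .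
  qed
  ultimately have "min_dist (dual_code C) \<le> 3"
    using min_dist_le_wt le_trans by blast
  then show ?thesis using d3 by simp
qed

lemma dual_hamming_no_proper_covering_subcode:
  fixes C :: "('a::{finite,field} ^ 'n::finite) set"
  assumes ham: "is_dual_hamming k H" "monomially_equivalent C H"
    and D: "vec.subspace D" "D \<subseteq> C" "Supp D = UNIV"
  shows "D = C"
proof (rule ccontr)
  assume "D \<noteq> C"
  then obtain x where x: "x \<in> C" "x \<notin> D" using D by blast
  obtain y where y: "y \<in> dual_code D" "dot x y \<noteq> 0"
    using dual_code_separates[OF D(1) x(2)] .
  obtain j e where je: "\<forall>z\<in>C. dot z y = e * z $ j"
    by (rule dual_hamming_functional_is_coordinate[OF ham bexI[where P = "\<lambda>x. dot x y \<noteq> 0", OF y(2) x(1)]])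
  have "e \<noteq> 0" using bspec[OF je x(1)] y(2) by auto
  have "z $ j = 0" if "z \<in> D" for z
  proof -
    have "e * z $ j = 0"
    proof -
      have "dot z y = 0" using y(1) that by (simp add: mem_dual_code_iff)
      then show ?thesis using bspec[OF je] D(2) that by auto
    qed
    then show ?thesis using \<open>e \<noteq> 0\<close> by simp
  qed
  then have "j \<notin> Supp D" by (auto simp: Supp_def supp_def)
  then show False using D(3) by simp
qed

lemma covering_dim_dual_hamming:
  fixes C :: "('a::{finite,field} ^ 'n::finite) set"
  assumes C: "vec.subspace C" and d2: "2 \<le> min_dist (dual_code C)"
    and ham: "is_dual_hamming k H" "monomially_equivalent C H"
  shows "covering_dim C = enat (vec.dim C)"
proof -
  have SC: "Supp C = UNIV" using Supp_eq_UNIV_if_min_dist_dual_ge_2[OF C d2] .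
  show ?thesis
    using dual_hamming_no_proper_covering_subcode[OF ham]
    by (intro covering_dim_eq_dim[OF SC C order_refl SC]) blast
qed

lemma card_vanishing_beyond: "card {v :: nat \<Rightarrow> 'a::{finite,zero}. \<forall>i\<ge>k. v i = 0} = CARD('a) ^ k"
proof -
  let ?V = "{v :: nat \<Rightarrow> 'a. \<forall>i\<ge>k. v i = 0}"
  have "bij_betw (\<lambda>v. restrict v {0..<k}) ?V (PiE {0..<k} (\<lambda>_. UNIV))"
  proof (rule bij_betw_imageI)
    show "inj_on (\<lambda>v. restrict v {0..<k}) ?V"
    proof (rule inj_onI, rule ext)
      fix v w i assume "v \<in> ?V" "w \<in> ?V" "restrict v {0..<k} = restrict w {0..<k}"
      then show "v i = w i"
        by (cases "i < k") (auto dest: fun_cong[of _ _ i])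
    qed
    show "(\<lambda>v. restrict v {0..<k}) ` ?V = PiE {0..<k} (\<lambda>_. UNIV)"
    proof
      show "PiE {0..<k} (\<lambda>_. UNIV) \<subseteq> (\<lambda>v. restrict v {0..<k}) ` ?V"
      proof
        fix f assume f: "f \<in> PiE {0..<k} (\<lambda>_. (UNIV :: 'a set))"
        have "restrict (\<lambda>i. if i < k then f i else 0) {0..<k} = f"
          using f by (auto simp: restrict_def PiE_def extensional_def)
        then show "f \<in> (\<lambda>v. restrict v {0..<k}) ` ?V"
          by (intro image_eqI[of _ _ "\<lambda>i. if i < k then f i else 0"]) auto
      qed
    qed auto
  qed
  then show ?thesis
    by (simp add: bij_betw_same_card card_PiE)
qed

lemma CARD_field_ge_2: "2 \<le> CARD('a::{finite,field})"
proof -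
  have "card {0, 1 :: 'a} \<le> CARD('a)" by (intro card_mono) auto
  then show ?thesis by simp
qed

lemma bij_betw_scaled_columns:
  fixes G :: "nat \<Rightarrow> 'n::finite \<Rightarrow> 'a::field"
  assumes col: "\<forall>j. \<exists>i<k. G i j \<noteq> 0"
    and ex1: "\<forall>v::nat \<Rightarrow> 'a. (\<forall>i\<ge>k. v i = 0) \<and> (\<exists>i. v i \<noteq> 0) \<longrightarrow>
                (\<exists>!j. \<exists>c. \<forall>i<k. G i j = c * v i)"
  shows "bij_betw (\<lambda>p i. if i < k then snd p * G i (fst p) else 0) (UNIV \<times> (UNIV - {0}))
           ({v. \<forall>i\<ge>k. v i = 0} - {\<lambda>_. 0})"
proof -
  let ?V = "{v :: nat \<Rightarrow> 'a. \<forall>i\<ge>k. v i = 0} - {\<lambda>_. 0}"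
  define F where "F = (\<lambda>(p :: 'n \<times> 'a) i. if i < k then snd p * G i (fst p) else 0)"
  have F_point: "(\<forall>i\<ge>k. F (j, c) i = 0) \<and> (\<exists>i. F (j, c) i \<noteq> 0)" if "c \<noteq> 0" for j c
  proof -
    obtain i where "i < k" "G i j \<noteq> 0" using col by blast
    then show ?thesis using that by (auto simp: F_def)
  qed
  show ?thesis
    unfolding F_def[symmetric]
  proof (rule bij_betw_imageI)
    show "inj_on F (UNIV \<times> (UNIV - {0}))"
    proof (rule inj_onI)
      fix p p' assume "p \<in> UNIV \<times> (UNIV - {0})" "p' \<in> UNIV \<times> (UNIV - {0})" and "F p = F p'"
      then obtain j c j' c' where pairs: "p = (j, c)" "p' = (j', c')" and c: "c \<noteq> 0" "c' \<noteq> 0"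
        and eq: "F (j, c) = F (j', c')" by (cases p, cases p') auto
      let ?P = "\<lambda>j. \<exists>c. \<forall>i<k. G i j = c * F (j', c') i"
      have "?P j"
        unfolding eq[symmetric] using c by (auto simp: F_def intro!: exI[of _ "inverse c"])
      moreover have "?P j'"
        using c by (auto simp: F_def intro!: exI[of _ "inverse c'"])
      moreover have "\<exists>!j. ?P j" using ex1 F_point[OF c(2)] by simp
      ultimately have "j = j'" by (auto simp: ex1_iff_ex_Uniq dest: Uniq_D)
      moreover obtain i where "i < k" "G i j \<noteq> 0" using col by blast
      ultimately show "p = p'" unfolding pairs
        using fun_cong[OF eq, of i] by (simp add: F_def)
    qed
    show "F ` (UNIV \<times> (UNIV - {0})) = ?V"
    proof
      show "?V \<subseteq> F ` (UNIV \<times> (UNIV - {0}))"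
      proof
        fix v assume v: "v \<in> ?V"
        then have "\<exists>!j. \<exists>c. \<forall>i<k. G i j = c * v i"
          using ex1 by (auto simp: fun_eq_iff)
        then obtain j c where jc: "\<forall>i<k. G i j = c * v i"
          by (auto dest: ex1_implies_ex)
        obtain i where "i < k" "G i j \<noteq> 0" using col by blast
        then have "c \<noteq> 0" using jc by auto
        then have "F (j, inverse c) = v" using v jc by (auto simp: F_def)
        then show "v \<in> F ` (UNIV \<times> (UNIV - {0}))" using \<open>c \<noteq> 0\<close> by (auto intro: image_eqI)
      qed
      show "F ` (UNIV \<times> (UNIV - {0})) \<subseteq> ?V"
      proof
        fix x assume "x \<in> F ` (UNIV \<times> (UNIV - {0}))"
        then obtain j c where "c \<noteq> 0" "x = F (j, c)" by auto
        then show "x \<in> ?V" using F_point[of c j] by (auto simp: fun_eq_iff)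
      qed
    qed
  qed
qed

lemma CARD_eq_if_columns_represent_points:
  fixes G :: "nat \<Rightarrow> 'n::finite \<Rightarrow> 'a::{finite,field}"
  assumes col: "\<forall>j. \<exists>i<k. G i j \<noteq> 0"
    and ex1: "\<forall>v::nat \<Rightarrow> 'a. (\<forall>i\<ge>k. v i = 0) \<and> (\<exists>i. v i \<noteq> 0) \<longrightarrow>
                (\<exists>!j. \<exists>c. \<forall>i<k. G i j = c * v i)"
  shows "CARD('n) = (CARD('a) ^ k - 1) div (CARD('a) - 1)"
proof -
  have eq: "CARD('n) * (CARD('a) - 1) = CARD('a) ^ k - 1"
    using bij_betw_same_card[OF bij_betw_scaled_columns[OF col ex1]]
    by (simp add: card_cartesian_product card_Diff_subset card_vanishing_beyond)
  have "CARD('n) = CARD('n) * (CARD('a) - 1) div (CARD('a) - 1)"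
    using CARD_field_ge_2[where 'a = 'a] by simp
  then show ?thesis unfolding eq .
qed

lemma row_space_of_basis:
  fixes C :: "('a::field ^ 'n::finite) set"
  assumes C: "vec.subspace C"
  obtains G :: "nat \<Rightarrow> 'n \<Rightarrow> 'a" where "C = row_space (vec.dim C) G"
    "\<And>u. (\<chi> j. \<Sum>i<vec.dim C. u i * G i j) = 0 \<Longrightarrow> \<forall>i<vec.dim C. u i = 0"
proof -
  define k where "k = vec.dim C"
  obtain B where B: "B \<subseteq> C" "vec.independent B" "C \<subseteq> vec.span B" "card B = k"
    unfolding k_def by (rule vec.basis_exists)
  have fin: "finite B" using B(2) vec.finiteI_independent by auto
  obtain b where b: "bij_betw b {0..<k} B" using ex_bij_betw_nat_finite[OF fin] B(4) by auto
  define G where "G i j = b i $ j" for i j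
  have row: "(\<chi> j. \<Sum>i<k. u i * G i j) = (\<Sum>i<k. u i *s b i)" for u
    by (simp add: vec_eq_iff G_def sum_component)
  have sum_B: "(\<Sum>v\<in>B. c v *s v) = (\<Sum>i<k. c (b i) *s b i)" for c
    using sum.reindex_bij_betw[OF b, of "\<lambda>v. c v *s v"] by (simp add: lessThan_atLeast0)
  have "C = row_space k G"
  proof
    show "C \<subseteq> row_space k G"
    proof
      fix z assume "z \<in> C"
      then obtain c where "z = (\<Sum>v\<in>B. c v *s v)"
        using B(3) vec.span_finite[OF fin] by auto
      then show "z \<in> row_space k G" by (auto simp: row_space_def row sum_B)
    qed
    have "b i \<in> C" if "i < k" for i using b B(1) that bij_betw_apply by fastforce
    then show "row_space k G \<subseteq> C"
      by (auto simp: row_space_def row intro!: vec.subspace_sum[OF C] vec.subspace_scale[OF C])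
  qed
  moreover have "\<forall>i<k. u i = 0" if "(\<chi> j. \<Sum>i<k. u i * G i j) = 0" for u
  proof -
    define c where "c v = u (the_inv_into {0..<k} b v)" for v
    have c_b: "c (b i) = u i" if "i < k" for i
      using that the_inv_into_f_f[of b "{0..<k}"] b by (simp add: c_def bij_betw_def)
    have "(\<Sum>v\<in>B. c v *s v) = 0"
      using that by (simp add: sum_B c_b row[symmetric])
    then have "\<forall>v\<in>B. c v = 0" using B(2) fin vec.independent_explicit by blast
    then show ?thesis using c_b b bij_betw_apply by fastforce
  qed
  ultimately show ?thesis using that unfolding k_def by blast
qed

lemma coefficients_proportional_if_kernel_subset:
  fixes v w :: "nat \<Rightarrow> 'a::field"
  assumes kernel: "\<And>u. (\<Sum>i<k. u i * v i) = 0 \<Longrightarrow> (\<Sum>i<k. u i * w i) = 0"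
    and i0: "i0 < k" "v i0 \<noteq> 0"
  shows "\<forall>i<k. w i = (w i0 / v i0) * v i"
proof (intro allI impI)
  fix i assume "i < k"
  define u where "u l = (if l = i then v i0 else 0) - (if l = i0 then v i else 0)" for l
  have pairing: "(\<Sum>l<k. u l * f l) = v i0 * f i - v i * f i0" for f
  proof -
    have "(\<Sum>l<k. u l * f l)
        = (\<Sum>l<k. (if l = i then v i0 * f l else 0) - (if l = i0 then v i * f l else 0))"
      by (rule sum.cong) (auto simp: u_def left_diff_distrib)
    then show ?thesis using \<open>i < k\<close> i0(1) by (simp add: sum_subtractf)
  qed
  have "v i0 * w i = v i * w i0"
    using kernel[of u] pairing[of v] pairing[of w] by (simp add: mult.commute)
  then show "w i = (w i0 / v i0) * v i"
    using i0(2) by (simp add: field_simps)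
qed

lemma subspace_orthogonal_combinations:
  fixes G :: "nat \<Rightarrow> 'n::finite \<Rightarrow> 'a::field"
  shows "vec.subspace ((\<lambda>u. \<chi> j. \<Sum>i<k. u i * G i j) ` {u. (\<Sum>i<k. u i * v i) = 0})"
    (is "vec.subspace (?row ` ?K)")
  unfolding vec.subspace_def
proof (intro conjI ballI allI)
  show "0 \<in> ?row ` ?K"
    by (rule image_eqI[of _ _ "\<lambda>_. 0"]) (auto simp: vec_eq_iff)
next
  fix x y assume "x \<in> ?row ` ?K" "y \<in> ?row ` ?K"
  then obtain u u' where "x = ?row u" "y = ?row u'" "u \<in> ?K" "u' \<in> ?K" by blast
  then show "x + y \<in> ?row ` ?K"
    by (intro image_eqI[of _ _ "\<lambda>i. u i + u' i"]) (auto simp: vec_eq_iff distrib_right sum.distrib)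
next
  fix c x assume "x \<in> ?row ` ?K"
  then obtain u where "x = ?row u" "u \<in> ?K" by blast
  then show "c *s x \<in> ?row ` ?K"
    by (intro image_eqI[of _ _ "\<lambda>i. c * u i"])
      (auto simp: vec_eq_iff mult.assoc sum_distrib_left[symmetric])
qed

text \<open>The codewords whose coefficient vector is orthogonal to v form a proper subcode, so some
  coordinate j vanishes on all of them; hence column j is proportional to v.\<close>
lemma column_proportional_if_no_proper_covering_subcode:
  fixes G :: "nat \<Rightarrow> 'n::finite \<Rightarrow> 'a::field"
  assumes indep: "\<And>u. (\<chi> j. \<Sum>i<k. u i * G i j) = 0 \<Longrightarrow> \<forall>i<k. u i = 0"
    and minimal: "\<And>D. vec.subspace D \<Longrightarrow> D \<subseteq> row_space k G \<Longrightarrow> Supp D = UNIV \<Longrightarrow>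
                        D = row_space k G"
    and v: "i0 < k" "v i0 \<noteq> 0"
  obtains j c where "\<forall>i<k. G i j = c * v i"
proof -
  define row where "row u = (\<chi> j. \<Sum>i<k. u i * G i j)" for u :: "nat \<Rightarrow> 'a"
  define D where "D = row ` {u. (\<Sum>i<k. u i * v i) = 0}"
  have row_diff: "row (\<lambda>i. u i - u' i) = row u - row u'" for u u'
    by (simp add: row_def vec_eq_iff left_diff_distrib sum_subtractf)
  have "vec.subspace D"
    unfolding D_def row_def by (rule subspace_orthogonal_combinations)
  moreover have "D \<subseteq> row_space k G"
    by (auto simp: D_def row_space_def row_def)
  moreover have "D \<noteq> row_space k G"
  proof
    define \<delta> where "\<delta> i = (if i = i0 then 1 else 0 :: 'a)" for i
    assume "D = row_space k G"
    then have "row \<delta> \<in> D" by (auto simp: row_space_def row_def)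
    then obtain u where u: "row \<delta> = row u" "(\<Sum>i<k. u i * v i) = 0"
      by (auto simp: D_def)
    have "row (\<lambda>i. u i - \<delta> i) = 0"
      using u(1) by (simp add: row_diff)
    then have "\<forall>i<k. u i = \<delta> i" using indep unfolding row_def by fastforce
    then have "(\<Sum>i<k. u i * v i) = (\<Sum>i<k. if i = i0 then v i else 0)"
      by (intro sum.cong) (auto simp: \<delta>_def)
    also have "\<dots> = v i0" using v(1) by simp
    finally
    have "(\<Sum>i<k. u i * v i) = v i0" .
    then show False using u(2) v(2) by simp
  qed
  ultimately obtain j where j: "j \<notin> Supp D"
    using minimal by blast
  have kernel: "(\<Sum>i<k. u i * G i j) = 0" if "(\<Sum>i<k. u i * v i) = 0" for u
  proof -
    have "row u \<in> D" using that by (auto simp: D_def)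
    then show ?thesis using j by (auto simp: Supp_def supp_def row_def)
  qed
  have "\<forall>i<k. G i j = (G i0 j / v i0) * v i"
    using coefficients_proportional_if_kernel_subset[where k = k and v = v and w = "\<lambda>i. G i j",
          OF kernel v] .
  then show ?thesis using that by blast
qed

lemma columns_distinct_if_min_dist_dual_ge_3:
  fixes G :: "nat \<Rightarrow> 'n::finite \<Rightarrow> 'a::field"
  assumes d3: "3 \<le> min_dist (dual_code (row_space k G))"
    and j: "\<forall>i<k. G i j = c * v i" and j': "\<forall>i<k. G i j' = c' * v i" "\<exists>i<k. G i j' \<noteq> 0"
  shows "j = j'"
proof (rule ccontr)
  assume "j \<noteq> j'"
  define y where "y = axis j c' - axis j' c"
  have "dot x y = 0" if x_row: "x \<in> row_space k G" for x
  proof -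
    obtain u where x: "x = (\<chi> j. \<Sum>i<k. u i * G i j)"
      using x_row unfolding row_space_def by blast
    have "x $ j = c * (\<Sum>i<k. u i * v i)" "x $ j' = c' * (\<Sum>i<k. u i * v i)"
      using j j'(1) by (simp_all add: x sum_distrib_left mult.left_commute)
    then show ?thesis
      unfolding y_def dot_diff_right dot_axis_right by simp
  qed
  then have "y \<in> dual_code (row_space k G)"
    by (simp add: mem_dual_code_iff)
  moreover have "y \<noteq> 0"
  proof -
    have "c' \<noteq> 0" using j' by auto
    then have "y $ j \<noteq> 0" using \<open>j \<noteq> j'\<close> by (simp add: y_def axis_def)
    then show ?thesis by auto
  qed
  moreover have "wt y \<le> card {j, j'}"
    by (rule wt_le_card) (auto simp: supp_def y_def axis_def)
  ultimately have "min_dist (dual_code (row_space k G)) \<le> 2"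
    using min_dist_le_wt[of y] \<open>j \<noteq> j'\<close> by fastforce
  then show False using d3 by simp
qed

lemma is_dual_hamming_if_no_proper_covering_subcode:
  fixes C :: "('a::{finite,field} ^ 'n::finite) set"
  assumes C: "vec.subspace C" and d3: "3 \<le> min_dist (dual_code C)"
    and minimal: "\<And>D. vec.subspace D \<Longrightarrow> D \<subseteq> C \<Longrightarrow> Supp D = UNIV \<Longrightarrow> D = C"
  shows "is_dual_hamming (vec.dim C) C"
proof -
  obtain G where "C = row_space (vec.dim C) G"
    and "\<And>u. (\<chi> j. \<Sum>i<vec.dim C. u i * G i j) = 0 \<Longrightarrow> \<forall>i<vec.dim C. u i = 0"
    by (metis row_space_of_basis[OF C])
  moreover define k where "k = vec.dim C"
  ultimately have C_eq: "C = row_space k G"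
    and indep: "\<And>u. (\<chi> j. \<Sum>i<k. u i * G i j) = 0 \<Longrightarrow> \<forall>i<k. u i = 0"
    by simp_all
  have col: "\<forall>j. \<exists>i<k. G i j \<noteq> 0"
  proof
    fix j
    have "j \<in> Supp C" using Supp_eq_UNIV_if_min_dist_dual_ge_2[OF C] d3 by simp
    then obtain z where "z \<in> C" "z $ j \<noteq> 0" by (auto simp: Supp_def supp_def)
    then obtain u where u: "(\<Sum>i<k. u i * G i j) \<noteq> 0" by (auto simp: C_eq row_space_def)
    show "\<exists>i<k. G i j \<noteq> 0"
    proof (rule ccontr)
      assume "\<not> (\<exists>i<k. G i j \<noteq> 0)"
      then have "(\<Sum>i<k. u i * G i j) = 0" by (auto intro!: sum.neutral)
      then show False using u by contradiction
    qed
  qed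
  have points: "\<forall>v. (\<forall>i\<ge>k. v i = 0) \<and> (\<exists>i. v i \<noteq> 0) \<longrightarrow>
      (\<exists>!j. \<exists>c. \<forall>i<k. G i j = c * v i)"
  proof (intro allI impI)
    fix v :: "nat \<Rightarrow> 'a" assume "(\<forall>i\<ge>k. v i = 0) \<and> (\<exists>i. v i \<noteq> 0)"
    then obtain i0 where v: "\<forall>i\<ge>k. v i = 0" "v i0 \<noteq> 0" by blast
    then have "i0 < k" by (meson not_le)
    obtain j c where j: "\<forall>i<k. G i j = c * v i"
      by (rule column_proportional_if_no_proper_covering_subcode[where k = k and G = G and v = v,
            OF indep minimal[unfolded C_eq]
            \<open>i0 < k\<close> v(2)])
    have uniq: "j' = j" if "\<forall>i<k. G i j' = c' * v i" for j' c'
      using columns_distinct_if_min_dist_dual_ge_3[OF d3[unfolded C_eq] that j spec[OF col]] .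
    show "\<exists>!j. \<exists>c. \<forall>i<k. G i j = c * v i"
    proof (rule ex1I[of _ j])
      show "\<exists>c. \<forall>i<k. G i j = c * v i" using j by blast
    next
      fix j' assume "\<exists>c. \<forall>i<k. G i j' = c * v i"
      then obtain c' where "\<forall>i<k. G i j' = c' * v i" by blast
      then show "j' = j" by (rule uniq)
    qed
  qed
  have "dual_hamming_generator k G"
    unfolding dual_hamming_generator_def
    using CARD_eq_if_columns_represent_points[OF col points] col points by blast
  then show ?thesis using C_eq unfolding is_dual_hamming_def k_def by blast
qed

lemma monomially_equivalent_refl: "monomially_equivalent C C"
  unfolding monomially_equivalent_def
  by (intro exI[of _ id] exI[of _ "\<lambda>_. 1"]) (simp add: vec_lambda_eta)

lemma covering_dim_le_if_not_dual_hamming: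
  fixes C :: "('a::{finite,field} ^ 'n::finite) set"
  assumes C: "vec.subspace C" and d3: "3 \<le> min_dist (dual_code C)"
    and not_ham: "\<not> (\<exists>k H. is_dual_hamming k H \<and> monomially_equivalent C H)"
  shows "covering_dim C \<le> enat (vec.dim C - 1)"
proof -
  have "\<not> is_dual_hamming (vec.dim C) C"
    using not_ham monomially_equivalent_refl by blast
  then obtain D where D: "vec.subspace D" "D \<subseteq> C" "Supp D = UNIV" "D \<noteq> C"
    using is_dual_hamming_if_no_proper_covering_subcode[OF C d3] by blast
  then have "vec.span D \<subset> vec.span C"
    using C by (simp add: vec.span_eq_iff[THEN iffD2] psubsetI)
  then have "vec.dim D < vec.dim C"
    by (rule vec.dim_psubset)
  then show ?thesis
    using covering_dim_le_dim[OF Supp_eq_UNIV_if_min_dist_dual_ge_2[OF C] D(1-3)] d3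
    by (simp add: order_trans)
qed

lemma eq_1_if_CARD_2:
  assumes "CARD('a::{finite,field}) = 2" "(x::'a) \<noteq> 0"
  shows "x = 1"
proof -
  have "{0, 1 :: 'a} = UNIV" using assms(1) by (intro card_subset_eq) auto
  then show ?thesis using assms(2) by blast
qed

lemma of_nat_if_CARD_2:
  assumes "CARD('a::{finite,field}) = 2"
  shows "(of_nat n :: 'a) = (if even n then 0 else 1)"
proof -
  have "(2 :: 'a) = 0"
  proof (rule ccontr)
    assume "(2 :: 'a) \<noteq> 0"
    then have "(2 :: 'a) = 1" by (rule eq_1_if_CARD_2[OF assms])
    then have "(1 :: 'a) + 1 = 1 + 0" by (simp add: one_add_one)
    then show False by (simp only: add_left_cancel one_neq_zero)
  qed
  then show ?thesis by (cases "even n") (auto elim!: evenE oddE)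
qed

lemma dim_ge_2_if_covering_binary_odd:
  fixes C :: "('a::{finite,field} ^ 'n::finite) set"
  assumes q2: "CARD('a) = 2" and odd: "odd CARD('n)"
    and sum_0: "\<And>x. x \<in> C \<Longrightarrow> (\<Sum>i\<in>UNIV. x $ i) = 0"
    and D: "vec.subspace D" "D \<subseteq> C" "Supp D = UNIV"
  shows "2 \<le> vec.dim D"
proof (rule ccontr)
  assume "\<not> 2 \<le> vec.dim D"
  then have "vec.dim D = 1" using dim_pos_if_Supp_eq_UNIV[OF D(3)] by simp
  moreover obtain B where B: "B \<subseteq> D" "D \<subseteq> vec.span B" "card B = vec.dim D"
    by (rule vec.basis_exists) blast
  ultimately obtain b where b: "B = {b}" by (auto simp: card_1_singleton_iff)
  \<comment> \<open>a line covering every coordinate is spanned by a vector of full support, i.e. by \<open>1\<close>\<close>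
  have b1: "b $ j = 1" for j
  proof -
    obtain z where "z \<in> D" "z $ j \<noteq> 0" using D(3) by (auto simp: Supp_def supp_def)
    moreover obtain c where "z = c *s b" using B(2) b \<open>z \<in> D\<close> by (auto simp: vec.span_singleton)
    ultimately show ?thesis using eq_1_if_CARD_2[OF q2] by auto
  qed
  have "b \<in> C" using B(1) b D(2) by auto
  then have "(\<Sum>i\<in>UNIV. b $ i) = 0" by (rule sum_0)
  then have "(of_nat CARD('n) :: 'a) = 0" by (simp add: b1)
  then show False using of_nat_if_CARD_2[OF q2] odd by simp
qed

text \<open>The only nonzero binary dual word of full weight is the all-ones vector.\<close>
lemma coordinate_sum_eq_0_if_binary:
  fixes C :: "('a::{finite,field} ^ 'n::finite) set"
  assumes q2: "CARD('a) = 2" and nonzero: "dual_code C \<noteq> {0}"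
    and dn: "min_dist (dual_code C) = CARD('n)" and x: "x \<in> C"
  shows "(\<Sum>i\<in>UNIV. x $ i) = 0"
proof -
  obtain y where y: "y \<in> dual_code C" "y \<noteq> 0"
    using nonzero vec.subspace_0[OF subspace_dual_code] by blast
  have "supp y = UNIV" using supp_eq_if_card_le_min_dist[OF y(1,2), of UNIV] dn by simp
  then have "y $ i = 1" for i using eq_1_if_CARD_2[OF q2] by (auto simp: supp_def)
  then show ?thesis using y(1) x by (simp add: mem_dual_code_iff)
qed

lemma covering_dim_binary_odd_full_dual_weight:
  fixes C :: "('a::{finite,field} ^ 'n::finite) set"
  assumes C: "vec.subspace C" and nonzero: "dual_code C \<noteq> {0}"
    and q2: "CARD('a) = 2" and dn: "min_dist (dual_code C) = CARD('n)" and odd: "odd CARD('n)"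
    and d3: "3 \<le> min_dist (dual_code C)"
  shows "covering_dim C = enat 2"
proof -
  have sum_0: "(\<Sum>i\<in>UNIV. x $ i) = 0" if "x \<in> C" for x
    by (rule coordinate_sum_eq_0_if_binary[OF q2 nonzero dn that])
  have "2 \<le> CARD('n)" using d3 dn by simp
  then obtain j1 j2 :: 'n where j12: "j1 \<noteq> j2" by (rule obtain_distinct_pair)
  have small: "card (UNIV - {j2}) < min_dist (dual_code C)" using dn d3 by (simp add: card_Diff_subset)
  obtain u where u: "u \<in> C" "\<forall>i\<in>UNIV - {j2}. u $ i = axis j1 1 $ i"
    using codeword_with_prescribed_restriction[OF C small] by blast
  obtain v where v: "v \<in> C" "\<forall>i\<in>UNIV - {j2}. v $ i = (1 - axis j1 1) $ i"
    using codeword_with_prescribed_restriction[OF C small] by blast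
  \<comment> \<open>u and v are the two codewords agreeing with e_j1 and 1 - e_j1 off j2; together they cover j2
    because u has even weight.\<close>
  have "u $ j2 + 1 = 0"
  proof -
    have "(\<Sum>i\<in>UNIV - {j2}. u $ i) = (\<Sum>i\<in>UNIV - {j2}. if i = j1 then 1 else 0)"
      using u(2) by (intro sum.cong) (auto simp: axis_def)
    then show ?thesis using sum_0[OF u(1)] sum.remove[of UNIV j2 "\<lambda>i. u $ i"] j12 by simp
  qed
  then have "u $ j2 \<noteq> 0" by auto
  moreover have "u $ j1 \<noteq> 0" using u(2) j12 by (auto simp: axis_def)
  moreover have "v $ i \<noteq> 0" if "i \<noteq> j1" "i \<noteq> j2" for i using v(2) that by (auto simp: axis_def)
  ultimately have "\<exists>z\<in>{u, v}. z $ j \<noteq> 0" for j by (cases "j = j1 \<or> j = j2") auto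
  then have cover: "Supp (vec.span {u, v}) = UNIV"
    by (auto simp: Supp_def supp_def intro: vec.span_base)
  have sub: "vec.span {u, v} \<subseteq> C" using u(1) v(1) C by (intro vec.span_minimal) auto
  have "vec.dim (vec.span {u, v}) \<le> card {u, v}"
    by (simp add: vec.dim_le_card vec.span_base subsetI)
  also have "\<dots> \<le> 2" by (simp add: card_insert_if)
  finally have "vec.dim (vec.span {u, v}) \<le> 2" .
  moreover have lower: "2 \<le> vec.dim D" if "vec.subspace D" "D \<subseteq> C" "Supp D = UNIV" for D
    using dim_ge_2_if_covering_binary_odd[OF q2 odd sum_0 that] .
  ultimately have "vec.dim (vec.span {u, v}) = 2"
    using lower[OF vec.subspace_span sub cover] by simp
  moreover have "covering_dim C = enat (vec.dim (vec.span {u, v}))"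
    using lower by (intro covering_dim_eq_dim[OF Supp_eq_UNIV_if_min_dist_dual_ge_2[OF C]
          vec.subspace_span sub cover]) (use d3 \<open>vec.dim (vec.span {u, v}) = 2\<close> in auto)
  ultimately show ?thesis by simp
qed

lemma dual_word_eq_if_eq_at:
  fixes C :: "('a::field ^ 'n::finite) set"
  assumes "y \<in> dual_code C" "y' \<in> dual_code C" "supp y \<subseteq> K" "supp y' \<subseteq> K"
    and "l \<in> K" "card K \<le> min_dist (dual_code C)" "y $ l = y' $ l"
  shows "y = y'"
proof -
  have "y - y' \<in> dual_code C"
    using assms(1,2) by (rule vec.subspace_diff[OF subspace_dual_code])
  moreover have "supp (y - y') \<subseteq> K - {l}"
  proof
    fix x assume "x \<in> supp (y - y')"
    then have "y $ x \<noteq> 0 \<or> y' $ x \<noteq> 0" "x \<noteq> l" using assms(7) by (auto simp: supp_def)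
    then show "x \<in> K - {l}" using assms(3,4) by (auto simp: supp_def)
  qed
  moreover have "card (K - {l}) < min_dist (dual_code C)"
    using assms(5,6) card_Diff1_less[of K l] by simp
  ultimately have "y - y' = 0" by (rule dual_word_eq_0_if_card_lt)
  then show ?thesis by simp
qed

definition proportional_on :: "'n set \<Rightarrow> 'a::field ^ 'n \<Rightarrow> ('a ^ 'n) set" where
  "proportional_on J a = {z. \<exists>t. \<forall>i\<in>J. z $ i = t * a $ i}"

lemma subspace_proportional_on: "vec.subspace (proportional_on J a)"
  unfolding vec.subspace_def proportional_on_def
proof (intro conjI ballI allI)
  show "0 \<in> {z. \<exists>t. \<forall>i\<in>J. z $ i = t * a $ i}" by (auto intro!: exI[of _ 0])
next
  fix x y assume "x \<in> {z. \<exists>t. \<forall>i\<in>J. z $ i = t * a $ i}" "y \<in> {z. \<exists>t. \<forall>i\<in>J. z $ i = t * a $ i}"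
  then obtain s t where "\<forall>i\<in>J. x $ i = s * a $ i" "\<forall>i\<in>J. y $ i = t * a $ i" by blast
  then show "x + y \<in> {z. \<exists>t. \<forall>i\<in>J. z $ i = t * a $ i}"
    by (auto intro!: exI[of _ "s + t"] simp: distrib_right)
next
  fix c x assume "x \<in> {z. \<exists>t. \<forall>i\<in>J. z $ i = t * a $ i}"
  then obtain t where "\<forall>i\<in>J. x $ i = t * a $ i" by blast
  then show "c *s x \<in> {z. \<exists>t. \<forall>i\<in>J. z $ i = t * a $ i}"
    by (auto intro!: exI[of _ "c * t"] simp: mult.assoc)
qed

text \<open>Codewords with prescribed values e_i on J, for i \<in> J - {j0}, are independent modulo
  proportional_on J a, so this condition cuts the dimension by at least |J| - 1.\<close>
lemma dim_inter_proportional_on_le: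
  fixes C :: "('a::field ^ 'n::finite) set"
  assumes C: "vec.subspace C" and J: "card J < min_dist (dual_code C)"
    and j0: "j0 \<in> J" "a $ j0 \<noteq> 0"
  shows "vec.dim (C \<inter> proportional_on J a) + (card J - 1) \<le> vec.dim C"
proof -
  define D where "D = C \<inter> proportional_on J a"
  define z where "z i = (SOME y. y \<in> C \<and> (\<forall>l\<in>J. y $ l = axis i 1 $ l))" for i
  have "\<exists>y. y \<in> C \<and> (\<forall>l\<in>J. y $ l = axis i 1 $ l)" for i
    using codeword_with_prescribed_restriction[OF C J, of "axis i 1"] by blast
  then have "z i \<in> C \<and> (\<forall>l\<in>J. z i $ l = axis i 1 $ l)" for i
    unfolding z_def by (rule someI_ex)
  then have zC: "z i \<in> C" and zJ: "l \<in> J \<Longrightarrow> z i $ l = (if l = i then 1 else 0)" for i l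
    by (auto simp: axis_def)
  have "vec.dim (D \<union> z ` Z) = vec.dim D + card Z" if "Z \<subseteq> J - {j0}" for Z
    using finite[of Z] that
  proof (induction Z rule: finite_subset_induct')
    case (insert i Z)
    have "D \<subseteq> proportional_on (J - Z) a"
      by (auto simp: D_def proportional_on_def)
    moreover have "z m \<in> proportional_on (J - Z) a" if "m \<in> Z" for m
      using that zJ unfolding proportional_on_def by (auto intro!: exI[of _ 0])
    then have "z ` Z \<subseteq> proportional_on (J - Z) a" by blast
    ultimately have "D \<union> z ` Z \<subseteq> proportional_on (J - Z) a"
      by (rule Un_least)
    then have span: "vec.span (D \<union> z ` Z) \<subseteq> proportional_on (J - Z) a"
      by (rule vec.span_minimal[OF _ subspace_proportional_on])
    have "z i \<notin> proportional_on (J - Z) a"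
    proof
      assume "z i \<in> proportional_on (J - Z) a"
      then obtain t where t: "\<forall>l\<in>J - Z. z i $ l = t * a $ l" by (auto simp: proportional_on_def)
      have "i \<in> J - Z" "j0 \<in> J - Z" "i \<noteq> j0" using insert j0 by auto
      then have "t * a $ j0 = 0" "t * a $ i = 1"
        using t zJ[of j0 i] zJ[of i i] by auto
      then show False using j0(2) by simp
    qed
    then have "z i \<notin> vec.span (D \<union> z ` Z)" using span by blast
    then show ?case
      using insert by (simp add: vec.dim_insert)
  qed simp
  moreover have "vec.dim (D \<union> z ` (J - {j0})) \<le> vec.dim C"
    using zC by (intro vec.dim_subset) (auto simp: D_def)
  ultimately show ?thesis using j0(1) by (simp add: D_def)
qed

lemma sum_insert_update:
  fixes y a :: "'a::comm_ring_1 ^ 'n::finite"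
  assumes "l \<notin> J"
  shows "(\<Sum>i\<in>insert l J. y $ i * (\<chi> i. if i = l then s else a $ i) $ i)
       = y $ l * s + (\<Sum>i\<in>J. y $ i * a $ i)"
  using assms by (simp add: sum.insert_if) (intro sum.cong; auto)

text \<open>The dual words supported in J \<union> {l}, |J| = d - 1, are the multiples of a single word y0;
  choosing the value s at l makes the prescribed vector orthogonal to y0, and s \<noteq> 0 exactly
  when a is not orthogonal to y0 on J.\<close>
lemma extends_with_nonzero_value_outside:
  fixes C :: "('a::field ^ 'n::finite) set"
  assumes C: "vec.subspace C" and J: "card J + 1 = min_dist (dual_code C)" and l: "l \<notin> J"
    and avoid: "\<And>y. y \<in> dual_code C \<Longrightarrow> supp y = insert l J \<Longrightarrow> (\<Sum>i\<in>J. y $ i * a $ i) \<noteq> 0"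
  obtains z where "z \<in> C" "\<forall>i\<in>J. z $ i = a $ i" "z $ l \<noteq> 0"
proof -
  define b where "b s = (\<chi> i. if i = l then s else a $ i)" for s
  have K: "card (insert l J) \<le> min_dist (dual_code C)" using J l by simp
  have "\<exists>s. s \<noteq> 0 \<and> (\<forall>y\<in>dual_code C. supp y \<subseteq> insert l J \<longrightarrow>
          (\<Sum>i\<in>insert l J. y $ i * b s $ i) = 0)"
  proof (cases "\<exists>y0\<in>dual_code C. y0 \<noteq> 0 \<and> supp y0 \<subseteq> insert l J")
    case True
    then obtain y0 where y0: "y0 \<in> dual_code C" "y0 \<noteq> 0" "supp y0 \<subseteq> insert l J" by blast
    then have supp_y0: "supp y0 = insert l J" using supp_eq_if_card_le_min_dist K by blast
    then have "y0 $ l \<noteq> 0" by (auto simp: supp_def)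
    define s where "s = - (\<Sum>i\<in>J. y0 $ i * a $ i) / y0 $ l"
    have "s \<noteq> 0" using avoid[OF y0(1) supp_y0] \<open>y0 $ l \<noteq> 0\<close> by (simp add: s_def)
    moreover have "(\<Sum>i\<in>insert l J. y $ i * b s $ i) = 0"
      if y: "y \<in> dual_code C" "supp y \<subseteq> insert l J" for y
    proof -
      define c where "c = y $ l / y0 $ l"
      have "y = c *s y0"
        using \<open>y0 $ l \<noteq> 0\<close> y supp_y0 K unfolding c_def
        by (intro dual_word_eq_if_eq_at[OF y(1) vec.subspace_scale[OF subspace_dual_code y0(1)]])
           (auto simp: supp_def)
      then have y_nth: "y $ i = c * y0 $ i" for i by simp
      have "(\<Sum>i\<in>insert l J. y $ i * b s $ i) = y $ l * s + (\<Sum>i\<in>J. y $ i * a $ i)"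
        unfolding b_def by (rule sum_insert_update[OF l])
      also have "\<dots> = c * (y0 $ l * s + (\<Sum>i\<in>J. y0 $ i * a $ i))"
        by (simp add: y_nth sum_distrib_left algebra_simps)
      also have "\<dots> = 0" using \<open>y0 $ l \<noteq> 0\<close> by (simp add: s_def)
      finally show ?thesis .
    qed
    ultimately show ?thesis by blast
  next
    case False
    then show ?thesis by (intro exI[of _ 1]) auto
  qed
  then obtain s where s: "s \<noteq> 0"
    and orth: "\<forall>y\<in>dual_code C. supp y \<subseteq> insert l J \<longrightarrow> (\<Sum>i\<in>insert l J. y $ i * b s $ i) = 0"
    by blast
  obtain z where "z \<in> C" "\<forall>i\<in>insert l J. z $ i = b s $ i"
    by (rule extends_to_codeword_if_orthogonal[OF C orth])
  then show ?thesis using that s l by (auto simp: b_def)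
qed

lemma Supp_inter_proportional_on:
  fixes C :: "('a::field ^ 'n::finite) set"
  assumes C: "vec.subspace C" and J: "card J + 1 = min_dist (dual_code C)"
    and a: "\<forall>i\<in>J. a $ i \<noteq> 0"
    and avoid: "\<And>y l. y \<in> dual_code C \<Longrightarrow> l \<notin> J \<Longrightarrow> supp y = insert l J \<Longrightarrow>
                   (\<Sum>i\<in>J. y $ i * a $ i) \<noteq> 0"
  shows "Supp (C \<inter> proportional_on J a) = UNIV"
proof -
  have "\<exists>z\<in>C \<inter> proportional_on J a. z $ l \<noteq> 0" for l
  proof -
    obtain z where z: "z \<in> C" "\<forall>i\<in>J. z $ i = a $ i" "l \<in> J \<or> z $ l \<noteq> 0"
    proof (cases "l \<in> J")
      case True
      have "card J < min_dist (dual_code C)" using J by simp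
      then obtain z where "z \<in> C" "\<forall>i\<in>J. z $ i = a $ i"
        by (rule codeword_with_prescribed_restriction[OF C])
      then show ?thesis using that True by blast
    next
      case False
      obtain z where "z \<in> C" "\<forall>i\<in>J. z $ i = a $ i" "z $ l \<noteq> 0"
        by (rule extends_with_nonzero_value_outside[OF C J False avoid[OF _ False]])
      then show ?thesis using that by blast
    qed
    moreover have "z \<in> proportional_on J a"
      using z(2) by (auto simp: proportional_on_def intro!: exI[of _ 1])
    moreover have "z $ l \<noteq> 0" using z a by auto
    ultimately show ?thesis by blast
  qed
  then show ?thesis by (auto simp: Supp_def supp_def)
qed

definition normalized_dual_words :: "('a::field ^ 'n) set \<Rightarrow> 'n \<Rightarrow> 'n set \<Rightarrow> ('a ^ 'n) set" where
  "normalized_dual_words C j0 J' = {y \<in> dual_code C. y $ j0 = 1 \<and>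
     (\<exists>l. l \<notin> insert j0 J' \<and> supp y = insert l (insert j0 J'))}"

lemma covering_dim_le_if_avoiding_normalized_dual_words:
  fixes C :: "('a::field ^ 'n::finite) set"
  assumes C: "vec.subspace C" and J': "card J' + 2 = min_dist (dual_code C)" "j0 \<notin> J'"
    and weights: "\<forall>i\<in>J'. al i \<noteq> 0" "be \<noteq> 0"
    and avoid: "\<forall>y\<in>normalized_dual_words C j0 J'. be + (\<Sum>i\<in>J'. y $ i * al i) \<noteq> 0"
  shows "covering_dim C \<le> enat (vec.dim C + 2 - min_dist (dual_code C))"
proof -
  define J where "J = insert j0 J'"
  define a where "a = (\<chi> i. if i = j0 then be else al i)"
  have J_card: "card J + 1 = min_dist (dual_code C)" using J' by (simp add: J_def)
  have a: "\<forall>i\<in>J. a $ i \<noteq> 0" using weights by (auto simp: a_def J_def)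
  have sum_a: "(\<Sum>i\<in>J. y $ i * a $ i) = y $ j0 * be + (\<Sum>i\<in>J'. y $ i * al i)" for y :: "'a ^ 'n"
    using J'(2) unfolding J_def a_def by (simp add: sum.insert) (intro sum.cong; auto)
  have "(\<Sum>i\<in>J. y $ i * a $ i) \<noteq> 0"
    if y: "y \<in> dual_code C" "l \<notin> J" "supp y = insert l J" for y l
  proof -
    have "y $ j0 \<noteq> 0" using y(3) by (auto simp: supp_def J_def)
    define y' where "y' = inverse (y $ j0) *s y"
    have "y' \<in> normalized_dual_words C j0 J'"
      using y \<open>y $ j0 \<noteq> 0\<close> vec.subspace_scale[OF subspace_dual_code y(1)]
      by (auto simp: normalized_dual_words_def y'_def J_def supp_def)
    moreover have "(\<Sum>i\<in>J. y' $ i * a $ i) = be + (\<Sum>i\<in>J'. y' $ i * al i)"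
      using \<open>y' \<in> normalized_dual_words C j0 J'\<close>
      by (simp add: sum_a normalized_dual_words_def)
    ultimately have "(\<Sum>i\<in>J. y' $ i * a $ i) \<noteq> 0"
      using avoid by simp
    then show ?thesis by (simp add: y'_def sum_distrib_left[symmetric] mult.assoc)
  qed
  then have "Supp (C \<inter> proportional_on J a) = UNIV"
    using Supp_inter_proportional_on[OF C J_card a] by blast
  moreover have "vec.dim (C \<inter> proportional_on J a) + (card J - 1) \<le> vec.dim C"
    using J_card a by (intro dim_inter_proportional_on_le[OF C]) (auto simp: J_def)
  moreover have "Supp C = UNIV"
    using Supp_eq_UNIV_if_min_dist_dual_ge_2[OF C] J' by simp
  ultimately have "covering_dim C \<le> enat (vec.dim (C \<inter> proportional_on J a))"
    using covering_dim_le_dim C subspace_proportional_on vec.subspace_inter by blast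
  also have "\<dots> \<le> enat (vec.dim C + 2 - min_dist (dual_code C))"
    using \<open>vec.dim (C \<inter> proportional_on J a) + (card J - 1) \<le> vec.dim C\<close> J_card J'(2)
    by (simp add: J_def)
  finally show ?thesis .
qed

lemma normalized_dual_words_nonzero:
  assumes "y \<in> normalized_dual_words C j0 J'" "i \<in> J'"
  shows "y $ i \<noteq> 0"
proof -
  obtain l where "supp y = insert l (insert j0 J')"
    using assms(1) by (auto simp: normalized_dual_words_def)
  then show ?thesis using assms(2) by (auto simp: supp_def set_eq_iff)
qed

text \<open>Two normalized words through the same l coincide; through different l and l', their
  difference would be a dual word of weight < d if they agreed at some i \<in> J'.\<close>
lemma normalized_dual_words_agree_or_differ:
  fixes C :: "('a::field ^ 'n::finite) set"
  assumes J': "card J' + 2 = min_dist (dual_code C)" "j0 \<notin> J'"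
    and y: "y \<in> normalized_dual_words C j0 J'" and y': "y' \<in> normalized_dual_words C j0 J'"
  shows "(\<forall>i\<in>J'. y $ i = y' $ i) \<or> (\<forall>i\<in>J'. y $ i \<noteq> y' $ i)"
proof -
  obtain l where l: "y \<in> dual_code C" "y $ j0 = 1" "l \<notin> insert j0 J'"
      "supp y = insert l (insert j0 J')"
    using y by (auto simp: normalized_dual_words_def)
  obtain l' where l': "y' \<in> dual_code C" "y' $ j0 = 1" "l' \<notin> insert j0 J'"
      "supp y' = insert l' (insert j0 J')"
    using y' by (auto simp: normalized_dual_words_def)
  show ?thesis
  proof (cases "l = l'")
    case True
    have "card (insert l (insert j0 J')) \<le> min_dist (dual_code C)"
      using J' l(3) by (simp add: card_insert_if)
    then have "y = y'"
      using True l l' by (intro dual_word_eq_if_eq_at[of y C y' "insert l (insert j0 J')" j0]) auto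
    then show ?thesis by simp
  next
    case False
    have "y $ i \<noteq> y' $ i" if i: "i \<in> J'" for i
    proof
      assume "y $ i = y' $ i"
      then have "supp (y - y') \<subseteq> insert l (insert l' (J' - {i}))"
        using l(2,4) l'(2,4) by (auto simp: supp_def set_eq_iff)
      moreover have "card (insert l (insert l' (J' - {i}))) < min_dist (dual_code C)"
      proof -
        have "card (insert l (insert l' (J' - {i}))) \<le> Suc (Suc (card (J' - {i})))"
          by (auto simp: card_insert_if)
        moreover have "card (J' - {i}) + 1 = card J'"
          using i card_gt_0_iff[of J'] by auto
        ultimately show ?thesis using J'(1) by arith
      qed
      ultimately have "y - y' = 0"
        by (rule dual_word_eq_0_if_card_lt[OF vec.subspace_diff[OF subspace_dual_code l(1) l'(1)]])
      moreover have "y $ l \<noteq> 0" "y' $ l = 0"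
        using l(4) l'(4) l(3) False by (auto simp: supp_def set_eq_iff)
      ultimately show False by simp
    qed
    then show ?thesis by blast
  qed
qed

lemma factors_through:
  assumes "\<forall>y\<in>Y. \<forall>y'\<in>Y. h y = h y' \<longrightarrow> f y = f y'"
  obtains g where "\<forall>y\<in>Y. f y = g (h y)"
proof
  show "\<forall>y\<in>Y. f y = (f \<circ> inv_into Y h) (h y)"
  proof
    fix y assume y: "y \<in> Y"
    have "inv_into Y h (h y) \<in> Y" "h (inv_into Y h (h y)) = h y"
      using y by (auto intro: inv_into_into f_inv_into_f)
    then have "f (inv_into Y h (h y)) = f y" using assms y by blast
    then show "f y = (f \<circ> inv_into Y h) (h y)" by simp
  qed
qed

lemma exists_nonzero_avoiding_negatives:
  fixes V :: "'a::{finite,field} set"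
  assumes "card V < CARD('a) - 1"
  obtains b where "b \<noteq> 0" "\<forall>v\<in>V. b + v \<noteq> 0"
proof -
  have "card (insert 0 (uminus ` V)) \<le> Suc (card (uminus ` V))"
    by (simp add: card_insert_if)
  also have "\<dots> \<le> Suc (card V)" by (simp add: card_image_le)
  finally have "card (insert 0 (uminus ` V)) < CARD('a)" using assms by simp
  then have "insert 0 (uminus ` V) \<noteq> UNIV" by auto
  then obtain b where b: "b \<notin> insert 0 (uminus ` V)" by blast
  have "b + v \<noteq> 0" if "v \<in> V" for v
  proof
    assume "b + v = 0"
    then have "b = - v" by (simp add: eq_neg_iff_add_eq_0)
    then show False using b that by auto
  qed
  then show ?thesis using that b by blast
qed

lemma exists_nonzero_weights_cancelling:
  fixes de :: "'n \<Rightarrow> 'a::{finite,field}"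
  assumes q3: "3 \<le> CARD('a)" and i: "i1 \<in> S" "i2 \<in> S" "i1 \<noteq> i2" and S: "finite S"
    and de: "\<forall>i\<in>S. de i \<noteq> 0"
  obtains al where "\<forall>i\<in>S. al i \<noteq> 0" "(\<Sum>i\<in>S. de i * al i) = 0"
proof -
  define m where "m = card (S - {i1} - {i2})"
  have "card {0, - of_nat m :: 'a} < CARD('a)"
    using q3 by (simp add: card_insert_if)
  then have "{0, - of_nat m :: 'a} \<noteq> UNIV" by auto
  then obtain e :: 'a where e: "e \<noteq> 0" "e \<noteq> - of_nat m" by blast
  \<comment> \<open>c sums to 0 over S, and e \<notin> {0, -m} makes all its values nonzero\<close>
  define c where "c i = (if i = i1 then - (of_nat m + e) else if i = i2 then e else 1)" for i
  have "of_nat m + e \<noteq> 0"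
    using e(2) by (simp add: eq_neg_iff_add_eq_0 add.commute)
  then have c: "c i \<noteq> 0" for i using e by (auto simp: c_def)
  have "(\<Sum>i\<in>S. c i) = c i1 + (c i2 + (\<Sum>i\<in>S - {i1} - {i2}. c i))"
    using i S by (simp add: sum.remove)
  also have "(\<Sum>i\<in>S - {i1} - {i2}. c i) = of_nat m"
    by (simp add: c_def m_def)
  finally have "(\<Sum>i\<in>S. c i) = 0" using i by (simp add: c_def)
  moreover have "(\<Sum>i\<in>S. de i * (inverse (de i) * c i)) = (\<Sum>i\<in>S. c i)"
    using de by (intro sum.cong) auto
  ultimately show ?thesis using that[of "\<lambda>i. inverse (de i) * c i"] de c by auto
qed

text \<open>By the agree-or-differ property, the value of y \<mapsto> \<Sum>i\<in>S. y_i al_i on Y only depends on y_i1,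
  which takes at most q - 1 values; if it takes all of them, al can be chosen to identify two of
  them. Either way some b \<noteq> 0 avoids all negated values.\<close>
lemma exists_weights_avoiding_zero:
  fixes Y :: "('a::{finite,field} ^ 'n::finite) set"
  assumes q3: "3 \<le> CARD('a)" and S: "2 \<le> card S"
    and nonzero: "\<forall>y\<in>Y. \<forall>i\<in>S. y $ i \<noteq> 0"
    and agree_or_differ: "\<forall>y\<in>Y. \<forall>y'\<in>Y. (\<forall>i\<in>S. y $ i = y' $ i) \<or> (\<forall>i\<in>S. y $ i \<noteq> y' $ i)"
  obtains al b where "\<forall>i\<in>S. al i \<noteq> 0" "b \<noteq> 0" "\<forall>y\<in>Y. b + (\<Sum>i\<in>S. y $ i * al i) \<noteq> 0"
proof -
  obtain T where "T \<subseteq> S" "card T = 2" by (rule obtain_subset_with_card_n[OF S])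
  then obtain i1 i2 where i: "i1 \<in> S" "i2 \<in> S" "i1 \<noteq> i2" by (auto simp: card_2_iff)
  define X where "X = (\<lambda>y. y $ i1) ` Y"
  define val where "val al y = (\<Sum>i\<in>S. y $ i * al i)" for al and y :: "'a ^ 'n"
  have factor: "\<exists>g. \<forall>y\<in>Y. val al y = g (y $ i1)" for al
  proof -
    have "\<forall>y\<in>Y. \<forall>y'\<in>Y. y $ i1 = y' $ i1 \<longrightarrow> val al y = val al y'"
      using agree_or_differ i(1) unfolding val_def by (metis (no_types, lifting) sum.cong)
    then show ?thesis by (rule factors_through) blast
  qed
  have "card X \<le> CARD('a) - 1"
  proof -
    have "X \<subseteq> UNIV - {0}" using nonzero i(1) by (auto simp: X_def)
    then show ?thesis by (metis card_Diff_singleton card_mono finite iso_tuple_UNIV_I)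
  qed
  have "\<exists>al. (\<forall>i\<in>S. al i \<noteq> 0) \<and> card (val al ` Y) < CARD('a) - 1"
  proof (cases "card X < CARD('a) - 1")
    case True
    obtain g where g: "\<forall>y\<in>Y. val (\<lambda>_. 1) y = g (y $ i1)" using factor by blast
    have "val (\<lambda>_. 1) ` Y = g ` X" using g by (auto simp: X_def image_image)
    then have "card (val (\<lambda>_. 1) ` Y) \<le> card X" by (simp add: card_image_le)
    then show ?thesis using True by (intro exI[of _ "\<lambda>_. 1"]) auto
  next
    case False
    then have "2 \<le> card X" using \<open>card X \<le> CARD('a) - 1\<close> q3 by simp
    then obtain T where "T \<subseteq> X" "card T = 2" by (rule obtain_subset_with_card_n)
    then obtain y1 y2 where y: "y1 \<in> Y" "y2 \<in> Y" "y1 $ i1 \<noteq> y2 $ i1"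
      by (auto simp: card_2_iff X_def)
    then have "\<forall>i\<in>S. y1 $ i - y2 $ i \<noteq> 0" using agree_or_differ i(1) by fastforce
    then obtain al where al: "\<forall>i\<in>S. al i \<noteq> 0" "(\<Sum>i\<in>S. (y1 $ i - y2 $ i) * al i) = 0"
      by (rule exists_nonzero_weights_cancelling[OF q3 i finite])
    obtain g where g: "\<forall>y\<in>Y. val al y = g (y $ i1)" using factor by blast
    have "g (y1 $ i1) = g (y2 $ i1)"
      using al(2) g y by (simp add: val_def left_diff_distrib sum_subtractf)
    then have "\<not> inj_on g X" using y by (auto simp: X_def inj_on_def)
    then have "card (g ` X) < card X" by (meson card_image_le finite inj_on_iff_eq_card le_neq_trans)
    moreover have "val al ` Y = g ` X" using g by (auto simp: X_def image_image)
    ultimately show ?thesis using al(1) \<open>card X \<le> CARD('a) - 1\<close> by (intro exI[of _ al]) auto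
  qed
  then obtain al where "\<forall>i\<in>S. al i \<noteq> 0" "card (val al ` Y) < CARD('a) - 1" by blast
  moreover obtain b where "b \<noteq> 0" "\<forall>v\<in>val al ` Y. b + v \<noteq> 0"
    using exists_nonzero_avoiding_negatives calculation(2) by blast
  ultimately show ?thesis using that[of al b] by (simp add: val_def)
qed

lemma dim_eq_CARD_minus_1:
  fixes C :: "('a::field ^ 'n::finite) set"
  assumes C: "vec.subspace C" and y: "y \<in> dual_code C" "y $ j0 \<noteq> 0"
    and small: "card (UNIV - {j0}) < min_dist (dual_code C)"
  shows "vec.dim C = CARD('n) - 1"
proof -
  define e :: "'a ^ 'n" where "e = axis j0 1"
  have "dot e y = y $ j0"
  proof -
    have "dot e y = (\<Sum>l\<in>UNIV. if l = j0 then y $ l else 0)"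
      by (rule sum.cong) (auto simp: e_def axis_def)
    then show ?thesis by simp
  qed
  then have "e \<notin> vec.span C"
    using y C by (auto simp: mem_dual_code_iff vec.span_eq_iff[THEN iffD2])
  then have dim_insert: "vec.dim (insert e C) = vec.dim C + 1" by (simp add: vec.dim_insert)
  have "UNIV \<subseteq> vec.span (insert e C)"
  proof
    fix x :: "'a ^ 'n"
    obtain z where z: "z \<in> C" "\<forall>i\<in>UNIV - {j0}. z $ i = x $ i"
      by (rule codeword_with_prescribed_restriction[OF C small])
    have "x = z + (x $ j0 - z $ j0) *s e"
      using z(2) by (auto simp: vec_eq_iff e_def axis_def)
    then show "x \<in> vec.span (insert e C)"
      using z(1) by (metis insertCI vec.span_add vec.span_base vec.span_scale)
  qed
  then have "CARD('n) \<le> vec.dim (insert e C)"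
    using vec.dim_subset[of UNIV "vec.span (insert e C)"] by (simp add: vec.dim_UNIV card_cart_basis)
  moreover have "vec.dim (insert e C) \<le> CARD('n)"
    using vec.dim_subset[of "insert e C" UNIV] by (simp add: vec.dim_UNIV card_cart_basis)
  ultimately show ?thesis using dim_insert by simp
qed

lemma supp_diff_if_CARD_2:
  fixes x y :: "'a::{finite,field} ^ 'n"
  assumes "CARD('a) = 2"
  shows "supp (x - y) = (supp x - supp y) \<union> (supp y - supp x)"
proof -
  have "x $ i \<noteq> y $ i \<longleftrightarrow> (x $ i \<noteq> 0) \<noteq> (y $ i \<noteq> 0)" for i
    using eq_1_if_CARD_2[OF assms, of "x $ i"] eq_1_if_CARD_2[OF assms, of "y $ i"]
    by (cases "x $ i = 0"; cases "y $ i = 0") auto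
  then show ?thesis by (auto simp: supp_def)
qed

text \<open>Over F_2 normalized words are determined by their supports, so words for J' and for
  J' with i replaced by m would differ in at most four coordinates.\<close>
lemma binary_normalized_dual_words_exchange:
  fixes C :: "('a::{finite,field} ^ 'n::finite) set"
  assumes q2: "CARD('a) = 2" and d5: "5 \<le> min_dist (dual_code C)"
    and y: "y \<in> normalized_dual_words C j0 J'" "supp y = insert l (insert j0 J')"
    and m: "m \<notin> supp y" and i: "i \<in> J'"
  shows "normalized_dual_words C j0 (insert m (J' - {i})) = {}"
proof (rule ccontr)
  assume "normalized_dual_words C j0 (insert m (J' - {i})) \<noteq> {}"
  then obtain y' l' where y': "y' \<in> dual_code C" "supp y' = insert l' (insert j0 (insert m (J' - {i})))"
    by (auto simp: normalized_dual_words_def)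
  have "y - y' \<in> dual_code C"
    using y(1) y'(1) by (auto simp: normalized_dual_words_def intro: vec.subspace_diff[OF subspace_dual_code])
  moreover have "y - y' \<noteq> 0"
  proof -
    have "m \<in> supp (y - y')" using m y'(2) by (simp add: supp_diff_if_CARD_2[OF q2])
    then show ?thesis by (auto simp: supp_def)
  qed
  moreover have "wt (y - y') \<le> 4"
  proof -
    have "supp (y - y') \<subseteq> {i, l, l', m}"
      using y(2) y'(2) by (auto simp: supp_diff_if_CARD_2[OF q2])
    then have "wt (y - y') \<le> card {i, l, l', m}" by (rule wt_le_card)
    also have "\<dots> \<le> 4" by (simp add: card_insert_if)
    finally show ?thesis .
  qed
  ultimately show False using min_dist_le_wt d5 by fastforce
qed

lemma binary_normalized_dual_words_sum_eq_0:
  assumes q2: "CARD('a::{finite,field}) = 2" and "even (card J')"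
    and y: "y \<in> normalized_dual_words C j0 J'"
  shows "(\<Sum>i\<in>J'. y $ i) = (0 :: 'a)"
proof -
  have "(\<Sum>i\<in>J'. y $ i) = (\<Sum>i\<in>J'. 1)"
    using normalized_dual_words_nonzero[OF y] eq_1_if_CARD_2[OF q2] by (intro sum.cong) auto
  also have "\<dots> = 0" using of_nat_if_CARD_2[OF q2, of "card J'"] assms(2) by simp
  finally show ?thesis .
qed

lemma binary_exists_empty_normalized_dual_words:
  fixes C :: "('a::{finite,field} ^ 'n::finite) set"
  assumes C: "vec.subspace C" and q2: "CARD('a) = 2" and d5: "5 \<le> min_dist (dual_code C)"
    and J': "card J' + 2 = min_dist (dual_code C)" "j0 \<notin> J'"
    and not_exc: "\<not> (vec.dim C = CARD('n) - 1 \<and> min_dist (dual_code C) = CARD('n))"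
  obtains J1 where "card J1 + 2 = min_dist (dual_code C)" "j0 \<notin> J1"
    "normalized_dual_words C j0 J1 = {}"
proof (cases "normalized_dual_words C j0 J' = {}")
  case False
  then obtain y l where y: "y \<in> normalized_dual_words C j0 J'" "y \<in> dual_code C" "y $ j0 = 1"
      "l \<notin> insert j0 J'" "supp y = insert l (insert j0 J')"
    by (auto simp: normalized_dual_words_def)
  have "supp y \<noteq> UNIV"
  proof
    assume "supp y = UNIV"
    then have "CARD('n) = card (insert l (insert j0 J'))" using y(5) by simp
    also have "\<dots> = min_dist (dual_code C)" using y(4) J' by (simp add: card_insert_if)
    finally have "CARD('n) = min_dist (dual_code C)" .
    moreover have small: "card (UNIV - {j0}) < min_dist (dual_code C)"
      using calculation d5 by (simp add: card_Diff_subset)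
    have "vec.dim C = CARD('n) - 1"
      using dim_eq_CARD_minus_1[OF C y(2) _ small] y(3) by simp
    ultimately show False using not_exc by simp
  qed
  then obtain m where m: "m \<notin> supp y" by blast
  have "J' \<noteq> {}" using J'(1) d5 by auto
  then obtain i where i: "i \<in> J'" by blast
  have "j0 \<noteq> m" "m \<notin> J'" using m y(5) by auto
  then have "card (insert m (J' - {i})) + 2 = min_dist (dual_code C)" "j0 \<notin> insert m (J' - {i})"
    using J' i card_gt_0_iff[of J'] by (auto simp: card_insert_if)
  then show ?thesis
    using that binary_normalized_dual_words_exchange[OF q2 d5 y(1,5) m i] by blast
next
  case True
  then show ?thesis using that J' by blast
qed

lemma covering_dim_le_if_min_dist_dual_ge_4:
  fixes C :: "('a::{finite,field} ^ 'n::finite) set"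
  assumes C: "vec.subspace C" and nonzero: "dual_code C \<noteq> {0}" and d4: "4 \<le> min_dist (dual_code C)"
    and not_exc: "\<not> (CARD('a) = 2 \<and> vec.dim C = CARD('n) - 1 \<and>
                     min_dist (dual_code C) = CARD('n) \<and> odd CARD('n))"
  shows "covering_dim C \<le> enat (vec.dim C + 2 - min_dist (dual_code C))"
proof -
  define d where "d = min_dist (dual_code C)"
  note bound = covering_dim_le_if_avoiding_normalized_dual_words[OF C]
  have "d \<le> CARD('n)"
    using min_dist_le_CARD[OF nonzero vec.subspace_0[OF subspace_dual_code]] by (simp add: d_def)
  then obtain J0 :: "'n set" where "card J0 = d - 1" by (meson ex_card diff_le_self le_trans)
  moreover from this have "J0 \<noteq> {}" using d4 by (auto simp: d_def)
  then obtain j0 where "j0 \<in> J0" by blast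
  ultimately have J': "card (J0 - {j0}) + 2 = min_dist (dual_code C)" "j0 \<notin> J0 - {j0}"
    using d4 by (auto simp: d_def)
  consider "3 \<le> CARD('a)" | "CARD('a) = 2" "even d" | "CARD('a) = 2" "odd d"
    using CARD_field_ge_2[where 'a = 'a] by linarith
  then show ?thesis
  proof cases
    case 1
    have "2 \<le> card (J0 - {j0})" using J' d4 by (simp add: d_def)
    moreover have "\<forall>y\<in>normalized_dual_words C j0 (J0 - {j0}). \<forall>i\<in>J0 - {j0}. y $ i \<noteq> 0"
      using normalized_dual_words_nonzero by blast
    moreover have "\<forall>y\<in>normalized_dual_words C j0 (J0 - {j0}).
        \<forall>y'\<in>normalized_dual_words C j0 (J0 - {j0}).
          (\<forall>i\<in>J0 - {j0}. y $ i = y' $ i) \<or> (\<forall>i\<in>J0 - {j0}. y $ i \<noteq> y' $ i)"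
      using normalized_dual_words_agree_or_differ[OF J'] by blast
    ultimately obtain al b where "\<forall>i\<in>J0 - {j0}. al i \<noteq> 0" "b \<noteq> 0"
        "\<forall>y\<in>normalized_dual_words C j0 (J0 - {j0}). b + (\<Sum>i\<in>J0 - {j0}. y $ i * al i) \<noteq> 0"
      by (rule exists_weights_avoiding_zero[OF 1])
    then show ?thesis by (rule bound[OF J'])
  next
    case 2
    have even: "even (card (J0 - {j0}))" using 2(2) unfolding d_def J'(1)[symmetric] by simp
    have "\<forall>y\<in>normalized_dual_words C j0 (J0 - {j0}). 1 + (\<Sum>i\<in>J0 - {j0}. y $ i * 1) \<noteq> 0"
      using binary_normalized_dual_words_sum_eq_0[OF 2(1) even] by simp
    then show ?thesis using bound[OF J', of "\<lambda>_. 1" 1] by simp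
  next
    case 3
    have "d \<noteq> 4" using 3(2) by auto
    then have "5 \<le> d" using d4 by (simp add: d_def)
    moreover have "\<not> (vec.dim C = CARD('n) - 1 \<and> d = CARD('n))"
      using not_exc 3 by (auto simp: d_def)
    ultimately obtain J1 where "card J1 + 2 = d" "j0 \<notin> J1" "normalized_dual_words C j0 J1 = {}"
      using binary_exists_empty_normalized_dual_words[OF C 3(1) _ J'] by (auto simp: d_def)
    then show ?thesis using bound[of J1 j0 "\<lambda>_. 1" 1] by (simp add: d_def)
  qed
qed

theorem mainTheorem12:
  fixes C :: "('a::{finite,field} ^ 'n::finite) set" and n k d :: nat
  assumes "is_code C"
    and "n = CARD('n)"
    and "k = code_dim C"
    and "dual_code C \<noteq> {0}"
    and "d = min_dist (dual_code C)"
    and "d \<ge> 3"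
    and "\<not> ((\<exists>m\<ge>2. CARD('a) = 2 ^ m) \<and> d > 4)"
  shows "(((\<exists>k' H. is_dual_hamming k' H \<and> monomially_equivalent C H)
            \<or> (CARD('a) = 2 \<and> k = n - 1 \<and> d = n \<and> odd n))
           \<longrightarrow> covering_dim C = enat (k + 3 - d))
         \<and> (\<not> ((\<exists>k' H. is_dual_hamming k' H \<and> monomially_equivalent C H)
            \<or> (CARD('a) = 2 \<and> k = n - 1 \<and> d = n \<and> odd n))
           \<longrightarrow> covering_dim C \<le> enat (k + 2 - d))"
proof -
  have C: "vec.subspace C" using assms(1) by (simp add: is_code_def)
  have k: "k = vec.dim C" using assms(3) by (simp add: code_dim_def)
  have d3: "3 \<le> min_dist (dual_code C)" using assms(5,6) by simp
  let ?ham = "\<exists>k' H. is_dual_hamming k' H \<and> monomially_equivalent C H"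
  let ?binary = "CARD('a) = 2 \<and> k = n - 1 \<and> d = n \<and> odd n"
  have "covering_dim C = enat (k + 3 - d)" if "?ham \<or> ?binary"
    using that
  proof
    assume ?ham
    then obtain k' H where ham: "is_dual_hamming k' H" "monomially_equivalent C H" by blast
    then show ?thesis
      using covering_dim_dual_hamming[OF C _ ham] min_dist_dual_eq_3_if_dual_hamming[OF C assms(4) d3 ham]
        assms(5) k by simp
  next
    assume ?binary
    then show ?thesis
      using covering_dim_binary_odd_full_dual_weight[OF C assms(4) _ _ _ d3] assms(2,5,6) by simp
  qed
  moreover have "covering_dim C \<le> enat (k + 2 - d)" if "\<not> (?ham \<or> ?binary)"
  proof (cases "d = 3")
    case True
    then show ?thesis using covering_dim_le_if_not_dual_hamming[OF C d3] that k by simp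
  next
    case False
    then show ?thesis
      using covering_dim_le_if_min_dist_dual_ge_4[OF C assms(4)] that assms(2,5,6) k by simp
  qed
  ultimately show ?thesis by blast
qed

end
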